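(* Let $\alpha\in[0,1]$ and let $\mathbf u:[0,\infty)\to\mathbb R^N$ be a differentiable solution of $$\frac{d\mathbf u}{dt}+\alpha\, D A\mathbf u+(1-\alpha)\big(A D\mathbf u+U D\mathbf a\big)=\mathbf 0,\qquad U=\operatorname{diag}(\mathbf u).$$ Define the product-rule defect $\Theta:=DA-AD-\operatorname{diag}(D\mathbf a)$ and $\gamma:=\|\operatorname{diag}(D\mathbf a)+(2\alpha-1)\Theta\|_H$. Then for all $t\ge0$ $$\frac{d}{dt}\|\mathbf u\|_H^2=-\mathbf u^T H\big(\operatorname{diag}(D\mathbf a)+(2\alpha-1)\Theta\big)\mathbf u\le\gamma\|\mathbf u\|_H^2,$$ and consequently $\|\mathbf u(t)\|_H^2\le e^{\gamma t}\|\mathbf u(0)\|_H^2$. In particular, for $\alpha=\tfrac12$ one has $\gamma=\|D\mathbf a\|_\infty=\max_i|(D\mathbf a)_i|$.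
   Context: Fix $N\ge2$. $H=\operatorname{diag}(H_{11},\dots,H_{NN})$ with all $H_{ii}>0$; $Q\in\mathbb R^{N\times N}$ satisfies $Q+Q^T=0$ (periodic SBP operator); $D:=H^{-1}Q$. The vector $\mathbf a\in\mathbb R^N$ has entries $a_i>0$ (samples of a positive coefficient $a(x)$ at the nodes) and $A=\operatorname{diag}(\mathbf a)$. For $\mathbf v\in\mathbb R^N$, $\|\mathbf v\|_H^2=\sum_i H_{ii}v_i^2$, and for a matrix $M$, $\|M\|_H=\sup_{\mathbf v\neq0}\|M\mathbf v\|_H/\|\mathbf v\|_H$ (induced norm). *)

theory Defs
  imports "HOL-Analysis.Analysis"
begin

text \<open>Vectors in R^N are modelled as real^'n for a finite index type 'n (N = CARD('n)).\<close>

definition diag_mat :: "real^'n \<Rightarrow> real^'n^'n" where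
  "diag_mat v = (\<chi> i j. if i = j then v $ i else 0)"

definition normH :: "real^'n \<Rightarrow> real^'n \<Rightarrow> real" where
  "normH h v = sqrt (\<Sum>i\<in>UNIV. h $ i * (v $ i)^2)"

definition opnormH :: "real^'n \<Rightarrow> real^'n^'n \<Rightarrow> real" where
  "opnormH h M = (SUP v\<in>{v. v \<noteq> 0}. normH h (M *v v) / normH h v)"

end

theory Submission
  imports Defs
begin

text \<open>
  Since \<open>H D = Q\<close> is skew-symmetric, \<open>u\<^sup>T H D A u = u\<^sup>T Q (A u)\<close> while
  \<open>u\<^sup>T H A D u = (A u)\<^sup>T Q u = - u\<^sup>T Q (A u)\<close>, and \<open>u\<^sup>T H U D a = u\<^sup>T H diag(D a) u\<close>.
  Substituting the equation into \<open>d/dt \<parallel>u\<parallel>\<^sub>H\<^sup>2 = 2 u\<^sup>T H u'\<close> therefore leaves only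
  \<open>-u\<^sup>T H M u\<close>, which Cauchy-Schwarz for the weighted inner product bounds by
  \<open>\<gamma> \<parallel>u\<parallel>\<^sub>H\<^sup>2\<close>; Gronwall's inequality gives the exponential bound. For \<open>\<alpha> = 1/2\<close> the
  matrix \<open>M = diag(D a)\<close> is diagonal, and the \<open>H\<close>-norm of a diagonal matrix is its largest
  entry in absolute value, attained at a unit vector.
\<close>

lemma diag_mat_mult_vec_nth [simp]: "(diag_mat d *v v) $ i = d $ i * v $ i"
  by (simp add: diag_mat_def matrix_vector_mult_def if_distrib [of "\<lambda>x. x * _"] cong: if_cong)

lemma diag_mat_mult_vec_commute: "diag_mat u *v v = diag_mat v *v u"
  by (simp add: vec_eq_iff)

lemma diag_mat_mult_diag_mat: "diag_mat d ** diag_mat e = diag_mat (\<chi> i. d $ i * e $ i)"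
  by (simp add: diag_mat_def matrix_matrix_mult_def vec_eq_iff if_distrib [of "\<lambda>x. x * _"] cong: if_cong)

lemma invertible_diag_mat:
  assumes "\<forall>i. d $ i \<noteq> 0"
  shows "invertible (diag_mat d)"
proof -
  have "diag_mat d ** diag_mat (\<chi> i. 1 / d $ i) = mat 1"
    using assms unfolding diag_mat_mult_diag_mat by (simp add: diag_mat_def mat_def vec_eq_iff)
  then show ?thesis by (auto simp: invertible_right_inverse)
qed

lemma matrix_inv_right:
  assumes "invertible A"
  shows "A ** matrix_inv A = mat 1"
  using someI_ex [OF assms [unfolded invertible_def]] by (simp add: matrix_inv_def)

lemma inner_skew_matrix:
  fixes Q :: "real^'n^'n"
  assumes "Q + transpose Q = 0"
  shows "x \<bullet> (Q *v y) = - (y \<bullet> (Q *v x))"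
proof -
  have "transpose Q = - Q" using assms by (simp add: eq_neg_iff_add_eq_0 add.commute)
  then have "x v* Q = - (Q *v x)"
    by (simp add: transpose_matrix_vector [symmetric] vec_eq_iff matrix_vector_mult_def sum_negf)
  then show ?thesis by (simp add: dot_lmul_matrix [symmetric] inner_commute)
qed

lemma energy_rate_identity:
  fixes h a u u' :: "real^'n" and Q D :: "real^'n^'n"
  assumes HD: "diag_mat h ** D = Q" and skew: "Q + transpose Q = 0"
    and A: "A = diag_mat a"
    and M: "M = diag_mat (D *v a) + (2 * \<alpha> - 1) *\<^sub>R (D ** A - A ** D - diag_mat (D *v a))"
    and ode: "u' + \<alpha> *\<^sub>R (D ** A) *v u + (1 - \<alpha>) *\<^sub>R ((A ** D) *v u + diag_mat u *v (D *v a)) = 0"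
  shows "2 * (u \<bullet> (diag_mat h *v u')) = - (u \<bullet> (diag_mat h *v (M *v u)))"
proof -
  let ?H = "diag_mat h"
  define X where "X = u \<bullet> (Q *v (A *v u))"
  define Y where "Y = u \<bullet> (?H *v (diag_mat (D *v a) *v u))"
  have DA: "u \<bullet> (?H *v ((D ** A) *v u)) = X"
    unfolding X_def by (metis HD matrix_vector_mul_assoc)
  have "u \<bullet> (?H *v ((A ** D) *v u)) = (A *v u) \<bullet> (?H *v (D *v u))"
    by (simp add: A matrix_vector_mul_assoc [symmetric] inner_vec_def mult_ac)
  also have "\<dots> = - X"
    using inner_skew_matrix [OF skew] by (simp add: X_def HD matrix_vector_mul_assoc)
  finally have AD: "u \<bullet> (?H *v ((A ** D) *v u)) = - X" .
  have UDa: "u \<bullet> (?H *v (diag_mat u *v (D *v a))) = Y"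
    by (simp add: Y_def diag_mat_mult_vec_commute)
  have "u' = - (\<alpha> *\<^sub>R (D ** A) *v u + (1 - \<alpha>) *\<^sub>R ((A ** D) *v u + diag_mat u *v (D *v a)))"
    using ode by (subst eq_neg_iff_add_eq_0) (simp add: add.assoc)
  then have "u \<bullet> (?H *v u') = - (\<alpha> * X + (1 - \<alpha>) * (- X + Y))"
    by (simp add: linear_neg [OF matrix_vector_mul_linear] DA AD UDa
        scaleR_matrix_vector_assoc [symmetric] matrix_vector_right_distrib matrix_vector_mult_diff_distrib matrix_vector_mult_scaleR
        inner_add_right inner_diff_right)
  moreover have "u \<bullet> (?H *v (M *v u)) = Y + (2 * \<alpha> - 1) * (X - (- X) - Y)"
    unfolding M
    by (simp add: DA AD Y_def matrix_vector_mult_add_rdistrib matrix_vector_mult_diff_rdistrib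
        scaleR_matrix_vector_assoc [symmetric] matrix_vector_right_distrib
        matrix_vector_mult_diff_distrib matrix_vector_mult_scaleR inner_add_right inner_diff_right)
  ultimately show ?thesis by (simp add: algebra_simps)
qed

lemma normH_eq_norm:
  assumes "\<forall>i. 0 \<le> h $ i"
  shows "normH h v = norm (diag_mat (\<chi> i. sqrt (h $ i)) *v v)"
  using assms by (simp add: normH_def norm_vec_def L2_set_def power_mult_distrib)

lemma normH_nonneg: "\<forall>i. 0 \<le> h $ i \<Longrightarrow> 0 \<le> normH h v"
  by (simp add: normH_eq_norm)

lemma normH_pos:
  assumes "\<forall>i. 0 < h $ i" and "v \<noteq> 0"
  shows "0 < normH h v"
proof -
  obtain k where "v $ k \<noteq> 0" using assms(2) by (auto simp: vec_eq_iff)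
  then have "diag_mat (\<chi> i. sqrt (h $ i)) *v v \<noteq> 0"
    using assms(1) [rule_format, of k] by (auto simp: vec_eq_iff intro!: exI [of _ k])
  then show ?thesis using assms(1) by (simp add: normH_eq_norm less_imp_le)
qed

lemma power2_normH: "\<forall>i. 0 \<le> h $ i \<Longrightarrow> (normH h v)\<^sup>2 = v \<bullet> (diag_mat h *v v)"
  by (simp add: normH_def inner_vec_def sum_nonneg power2_eq_square mult_ac)

lemma normH_scaleR: "\<forall>i. 0 \<le> h $ i \<Longrightarrow> normH h (c *\<^sub>R v) = \<bar>c\<bar> * normH h v"
  by (simp add: normH_eq_norm matrix_vector_mult_scaleR)

lemma abs_inner_diag_mat_le_normH:
  assumes "\<forall>i. 0 \<le> h $ i"
  shows "\<bar>x \<bullet> (diag_mat h *v y)\<bar> \<le> normH h x * normH h y"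
proof -
  let ?S = "diag_mat (\<chi> i. sqrt (h $ i))"
  have "x \<bullet> (diag_mat h *v y) = (?S *v x) \<bullet> (?S *v y)"
    using assms by (simp add: inner_vec_def mult_ac)
  then show ?thesis using Cauchy_Schwarz_ineq2 by (simp add: normH_eq_norm assms)
qed

lemma normH_matrix_bounded:
  assumes "\<forall>i. 0 < h $ i"
  obtains K where "\<And>v. normH h (M *v v) \<le> K * normH h v"
proof -
  define S where "S = diag_mat (\<chi> i. sqrt (h $ i))"
  define S' where "S' = diag_mat (\<chi> i. 1 / sqrt (h $ i))"
  have S'S: "S' *v (S *v v) = v" for v
    using assms by (simp add: S_def S'_def vec_eq_iff less_imp_neq [symmetric])
  obtain K where K: "\<And>w. norm ((S ** M ** S') *v w) \<le> norm w * K"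
    using bounded_linear.bounded [OF matrix_vector_mul_bounded_linear] by blast
  have "normH h (M *v v) \<le> K * normH h v" for v
    using K [of "S *v v"] assms
    by (simp add: normH_eq_norm less_imp_le S_def [symmetric] matrix_vector_mul_assoc [symmetric]
        S'S mult.commute)
  then show thesis by (rule that)
qed

lemma bdd_above_opnormH:
  assumes "\<forall>i. 0 < h $ i"
  shows "bdd_above ((\<lambda>v. normH h (M *v v) / normH h v) ` {v. v \<noteq> 0})"
proof -
  obtain K where K: "\<And>v. normH h (M *v v) \<le> K * normH h v"
    using normH_matrix_bounded [OF assms] by blast
  have "normH h (M *v v) / normH h v \<le> K" if "v \<noteq> 0" for v
    using K [of v] normH_pos [OF assms that] by (simp add: divide_le_eq)
  then show ?thesis by (auto intro: bdd_aboveI [of _ K])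
qed

lemma opnormH_bound:
  assumes "\<forall>i. 0 < h $ i"
  shows "normH h (M *v v) \<le> opnormH h M * normH h v"
proof (cases "v = 0")
  case True
  then show ?thesis by (simp add: normH_def)
next
  case False
  have "normH h (M *v v) / normH h v \<le> opnormH h M"
    unfolding opnormH_def using False bdd_above_opnormH [OF assms] by (auto intro: cSUP_upper)
  then show ?thesis using normH_pos [OF assms False] by (simp add: divide_le_eq)
qed

lemma normH_diag_mat_le:
  assumes h: "\<forall>i. 0 \<le> h $ i" and d: "\<forall>i. \<bar>d $ i\<bar> \<le> c"
  shows "normH h (diag_mat d *v v) \<le> c * normH h v"
proof -
  have c: "0 \<le> c" using d abs_ge_zero order_trans by blast
  have "(\<Sum>i\<in>UNIV. h $ i * ((diag_mat d *v v) $ i)\<^sup>2) \<le> (\<Sum>i\<in>UNIV. c\<^sup>2 * (h $ i * (v $ i)\<^sup>2))"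
  proof (rule sum_mono)
    fix i
    have "(d $ i)\<^sup>2 \<le> c\<^sup>2" using power_mono [OF d [rule_format, of i] abs_ge_zero, of 2] by simp
    then show "h $ i * ((diag_mat d *v v) $ i)\<^sup>2 \<le> c\<^sup>2 * (h $ i * (v $ i)\<^sup>2)"
      using h mult_right_mono [of "(d $ i)\<^sup>2" "c\<^sup>2" "h $ i * (v $ i)\<^sup>2"]
      by (simp add: power_mult_distrib mult_ac)
  qed
  also have "\<dots> = c\<^sup>2 * (\<Sum>i\<in>UNIV. h $ i * (v $ i)\<^sup>2)" by (simp add: sum_distrib_left)
  finally have "normH h (diag_mat d *v v) \<le> sqrt (c\<^sup>2 * (\<Sum>i\<in>UNIV. h $ i * (v $ i)\<^sup>2))"
    unfolding normH_def by (rule real_sqrt_le_mono)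
  then show ?thesis using c by (simp add: normH_def real_sqrt_mult)
qed

lemma opnormH_diag_mat:
  fixes h d :: "real^'n"
  assumes h: "\<forall>i. 0 < h $ i"
  shows "opnormH h (diag_mat d) = (MAX i\<in>UNIV. \<bar>d $ i\<bar>)"
proof -
  let ?m = "MAX i\<in>UNIV. \<bar>d $ i\<bar>"
  have h0: "\<forall>i. 0 \<le> h $ i" using h less_imp_le by blast
  have "?m \<in> range (\<lambda>i. \<bar>d $ i\<bar>)" by (rule Max_in) auto
  then obtain k where k: "\<bar>d $ k\<bar> = ?m" by (metis imageE)
  have e: "axis k 1 \<noteq> (0 :: real^'n)" by (simp add: axis_eq_0_iff)
  have "diag_mat d *v axis k 1 = d $ k *\<^sub>R axis k 1" by (simp add: vec_eq_iff axis_def)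
  then have attained: "normH h (diag_mat d *v axis k 1) / normH h (axis k 1) = ?m"
    using k normH_pos [OF h e] by (simp add: normH_scaleR [OF h0])
  have bound: "normH h (diag_mat d *v v) / normH h v \<le> ?m" if "v \<noteq> 0" for v
    using normH_diag_mat_le [OF h0, of d ?m v] normH_pos [OF h that]
    by (simp add: divide_le_eq)
  show ?thesis
    unfolding opnormH_def
  proof (rule cSup_eq_maximum)
    show "?m \<in> (\<lambda>v. normH h (diag_mat d *v v) / normH h v) ` {v. v \<noteq> 0}"
      using e attained by (metis (mono_tags) image_eqI mem_Collect_eq)
  qed (use bound in auto)
qed

lemma has_real_derivative_power2_normH:
  assumes h: "\<forall>i. 0 \<le> h $ i" and u: "(u has_vector_derivative u') (at t within S)"
  shows "((\<lambda>s. (normH h (u s))\<^sup>2) has_real_derivative 2 * (u t \<bullet> (diag_mat h *v u'))) (at t within S)"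
proof -
  have "((\<lambda>s. u s \<bullet> (diag_mat h *v u s)) has_real_derivative
          u' \<bullet> (diag_mat h *v u t) + u t \<bullet> (diag_mat h *v u')) (at t within S)"
    using u unfolding has_real_derivative_iff_has_vector_derivative has_vector_derivative_def
    by (auto intro!: derivative_eq_intros
        bounded_linear.has_derivative [OF matrix_vector_mul_bounded_linear]
        simp: matrix_vector_mult_scaleR algebra_simps)
  moreover have "u' \<bullet> (diag_mat h *v u t) = u t \<bullet> (diag_mat h *v u')"
    by (simp add: inner_vec_def mult_ac)
  ultimately show ?thesis by (simp add: power2_normH [OF h])
qed

lemma gronwall_exp_bound:
  fixes f f' :: "real \<Rightarrow> real"
  assumes f: "\<And>t. 0 \<le> t \<Longrightarrow> (f has_real_derivative f' t) (at t within {0..})"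
    and le: "\<And>t. 0 \<le> t \<Longrightarrow> f' t \<le> c * f t"
    and t: "0 \<le> t"
  shows "f t \<le> exp (c * t) * f 0"
proof -
  define g where "g s = exp (- c * s) * f s" for s
  define g' where "g' s = exp (- c * s) * (f' s - c * f s)" for s
  have g': "(g has_real_derivative g' s) (at s within {0..t})" if "0 \<le> s" for s
  proof -
    have "(f has_real_derivative f' s) (at s within {0..t})"
      using f [OF that] by (rule has_field_derivative_subset) auto
    then show ?thesis
      unfolding g_def g'_def by (auto intro!: derivative_eq_intros simp: algebra_simps)
  qed
  have "\<exists>x\<in>{0..t}. g t - g 0 = (*) (g' x) (t - 0)"
    by (rule mvt_very_simple [OF t]) (use g' in \<open>auto simp: has_field_derivative_def\<close>)
  then obtain x where x: "x \<in> {0..t}" and mvt: "g t - g 0 = g' x * t" by auto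
  have "g' x \<le> 0" unfolding g'_def using le x by (auto intro!: mult_nonneg_nonpos)
  then have "g t \<le> g 0" using mvt mult_nonpos_nonneg [of "g' x" t] t by linarith
  then have "exp (c * t) * (exp (- c * t) * f t) \<le> exp (c * t) * f 0" by (simp add: g_def)
  then show ?thesis by (simp add: mult.assoc [symmetric] exp_add [symmetric])
qed

theorem mainTheorem1:
  fixes h :: "real^'n" and Q :: "real^'n^'n" and a :: "real^'n"
    and \<alpha> :: real and u u' :: "real \<Rightarrow> real^'n"
  assumes N2: "CARD('n) \<ge> 2"
    and hpos: "\<forall>i. h $ i > 0"
    and Qskew: "Q + transpose Q = 0"
    and apos: "\<forall>i. a $ i > 0"
    and alpha: "0 \<le> \<alpha>" "\<alpha> \<le> 1"
    and deriv: "\<forall>t\<ge>0. (u has_vector_derivative u' t) (at t within {0..})"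
    and ode: "\<forall>t\<ge>0. u' t
        + \<alpha> *\<^sub>R ((matrix_inv (diag_mat h) ** Q) ** diag_mat a) *v u t
        + (1 - \<alpha>) *\<^sub>R ((diag_mat a ** (matrix_inv (diag_mat h) ** Q)) *v u t
                         + diag_mat (u t) *v ((matrix_inv (diag_mat h) ** Q) *v a)) = 0"
  shows "let H = diag_mat h; D = matrix_inv H ** Q; A = diag_mat a;
             \<Theta> = D ** A - A ** D - diag_mat (D *v a);
             M = diag_mat (D *v a) + (2 * \<alpha> - 1) *\<^sub>R \<Theta>;
             \<gamma> = opnormH h M
         in (\<forall>t\<ge>0.
               ((\<lambda>s. (normH h (u s))^2) has_real_derivative
                  (- (u t \<bullet> (H *v (M *v u t))))) (at t within {0..})
             \<and> - (u t \<bullet> (H *v (M *v u t))) \<le> \<gamma> * (normH h (u t))^2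
             \<and> (normH h (u t))^2 \<le> exp (\<gamma> * t) * (normH h (u 0))^2)
          \<and> (\<alpha> = 1/2 \<longrightarrow> \<gamma> = (MAX i\<in>UNIV. \<bar>(D *v a) $ i\<bar>))"
proof -
  define H where "H = diag_mat h"
  define D where "D = matrix_inv H ** Q"
  define A where "A = diag_mat a"
  define M where "M = diag_mat (D *v a) + (2 * \<alpha> - 1) *\<^sub>R (D ** A - A ** D - diag_mat (D *v a))"
  define \<gamma> where "\<gamma> = opnormH h M"
  have h0: "\<forall>i. 0 \<le> h $ i" using hpos less_imp_le by blast
  have "H ** matrix_inv H = mat 1"
    unfolding H_def using hpos
    by (intro matrix_inv_right invertible_diag_mat) (simp add: less_imp_neq [symmetric])
  then have HD: "H ** D = Q" by (simp add: D_def matrix_mul_assoc)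
  have rate: "((\<lambda>s. (normH h (u s))\<^sup>2) has_real_derivative - (u t \<bullet> (H *v (M *v u t)))) (at t within {0..})"
    if "0 \<le> t" for t
    using has_real_derivative_power2_normH [OF h0 deriv [rule_format, OF that]]
      energy_rate_identity [OF HD [unfolded H_def] Qskew A_def M_def
        ode [rule_format, OF that, folded H_def, folded D_def A_def]]
    by (simp add: H_def)
  have bound: "- (u t \<bullet> (H *v (M *v u t))) \<le> \<gamma> * (normH h (u t))\<^sup>2" for t
    using abs_inner_diag_mat_le_normH [OF h0, of "u t" "M *v u t"]
      mult_left_mono [OF opnormH_bound [OF hpos, of M "u t"] normH_nonneg [OF h0, of "u t"]]
    by (simp add: H_def \<gamma>_def power2_eq_square mult_ac)
  have "(normH h (u t))\<^sup>2 \<le> exp (\<gamma> * t) * (normH h (u 0))\<^sup>2" if "0 \<le> t" for t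
    using gronwall_exp_bound [OF rate bound that] .
  moreover have "\<alpha> = 1/2 \<longrightarrow> \<gamma> = (MAX i\<in>UNIV. \<bar>(D *v a) $ i\<bar>)"
  proof
    assume "\<alpha> = 1/2"
    then have "M = diag_mat (D *v a)" by (simp add: M_def)
    then show "\<gamma> = (MAX i\<in>UNIV. \<bar>(D *v a) $ i\<bar>)" by (simp add: \<gamma>_def opnormH_diag_mat [OF hpos])
  qed
  ultimately show ?thesis
    unfolding Let_def H_def [symmetric] D_def [symmetric] A_def [symmetric] M_def [symmetric]
      \<gamma>_def [symmetric]
    using rate bound by blast
qed

end
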